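(* Let $\lambda$ be a partition with at most $n$ parts and $b=x_1\otimes\cdots\otimes x_n\in E_\lambda$. Let $Z_b$ be the set of $i\in\{1,\dots,n-1\}$ such that exactly one of $x_i,x_{i+1}$ is barred. Then $$\sum_{i\in Z_b}(n-i)\bigl(1-2H(x_i\otimes x_{i+1})\bigr)=\frac{n-|\lambda|}{2}.$$
   Context: Let $\mathcal{C}_n$ be the ordered alphabet $1<2<\cdots<n<\bar n<\overline{n-1}<\cdots<\bar1$; letters $k$ are unbarred, letters $\bar k$ barred; $\mathrm{wt}(k)=\varepsilon_k$, $\mathrm{wt}(\bar k)=-\varepsilon_k$ ($\varepsilon_k$ standard basis of $\mathbb{Z}^n$). $E_\lambda$ is the set of words $x_1\otimes\cdots\otimes x_n$ over $\mathcal{C}_n$ such that each partial sum $w_i=\sum_{j\le i}\mathrm{wt}(x_j)$ ($1\le i\le n$) is a partition (weakly decreasing, nonnegative) and $w_n=\lambda$. $|\lambda|=\sum\lambda_i$. For letters $x,y$, $H(x\otimes y)=1$ if $x\ge y$ and $0$ if $x<y$. *)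

theory Defs
  imports Complex_Main
begin

datatype letter = Unb nat | Bar nat

definition in_alphabet :: "nat \<Rightarrow> letter \<Rightarrow> bool" where
  "in_alphabet n x = (case x of Unb k \<Rightarrow> 1 \<le> k \<and> k \<le> n | Bar k \<Rightarrow> 1 \<le> k \<and> k \<le> n)"

definition barred :: "letter \<Rightarrow> bool" where
  "barred x = (case x of Unb _ \<Rightarrow> False | Bar _ \<Rightarrow> True)"

fun letter_less :: "letter \<Rightarrow> letter \<Rightarrow> bool" where
  "letter_less (Unb i) (Unb j) = (i < j)"
| "letter_less (Unb i) (Bar j) = True"
| "letter_less (Bar i) (Unb j) = False"
| "letter_less (Bar i) (Bar j) = (j < i)"

text \<open>Weight of a letter, as a vector indexed by 1..n.\<close>
fun wt :: "letter \<Rightarrow> nat \<Rightarrow> int" where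
  "wt (Unb k) j = (if j = k then 1 else 0)"
| "wt (Bar k) j = (if j = k then -1 else 0)"

definition psum :: "letter list \<Rightarrow> nat \<Rightarrow> nat \<Rightarrow> int" where
  "psum xs i j = (\<Sum>t<i. wt (xs ! t) j)"

definition is_partition :: "nat \<Rightarrow> (nat \<Rightarrow> int) \<Rightarrow> bool" where
  "is_partition n w = ((\<forall>j. 1 \<le> j \<and> j < n \<longrightarrow> w (Suc j) \<le> w j) \<and> (\<forall>j. 1 \<le> j \<and> j \<le> n \<longrightarrow> 0 \<le> w j))"

definition E :: "nat \<Rightarrow> (nat \<Rightarrow> int) \<Rightarrow> letter list set" where
  "E n lam = {xs. length xs = n \<and> (\<forall>x\<in>set xs. in_alphabet n x)
      \<and> (\<forall>i. 1 \<le> i \<and> i \<le> n \<longrightarrow> is_partition n (psum xs i))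
      \<and> (\<forall>j. 1 \<le> j \<and> j \<le> n \<longrightarrow> psum xs n j = lam j)}"

definition size_part :: "nat \<Rightarrow> (nat \<Rightarrow> int) \<Rightarrow> int" where
  "size_part n lam = (\<Sum>j=1..n. lam j)"

definition H :: "letter \<Rightarrow> letter \<Rightarrow> int" where
  "H x y = (if letter_less x y then 0 else 1)"

text \<open>Z_b, with x_i = xs ! (i - 1).\<close>
definition Zset :: "nat \<Rightarrow> letter list \<Rightarrow> nat set" where
  "Zset n xs = {i. 1 \<le> i \<and> i \<le> n - 1 \<and> barred (xs ! (i - 1)) \<noteq> barred (xs ! i)}"

end

theory Submission
  imports Defs
begin

text \<open>Let beta_i be 1 if x_i is barred and 0 otherwise. For i in Z_b the order of the
  alphabet gives 1 - 2 H(x_i, x_(i+1)) = beta_(i+1) - beta_i, and outside Z_b this difference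
  vanishes, so the sum is the sum of (n - i)(beta_(i+1) - beta_i). Summation by parts turns it
  into beta_1 + ... + beta_n - n beta_1. Since w_1 is a partition, x_1 is unbarred; since every
  letter contributes +1 or -1 to the size of w_n = lambda, the number of barred letters is
  (n - |lambda|)/2.\<close>

lemma sum_by_parts_weighted:
  fixes b :: "nat \<Rightarrow> 'a::comm_ring_1"
  shows "(\<Sum>i\<in>{1..<n}. of_nat (n - i) * (b i - b (i - 1))) = (\<Sum>i<n. b i) - of_nat n * b 0"
proof (induction n)
  case 0
  then show ?case by simp
next
  case (Suc n)
  have "(\<Sum>i\<in>{1..<Suc n}. of_nat (Suc n - i) * (b i - b (i - 1)))
      = (\<Sum>i\<in>{1..<Suc n}. of_nat (n - i) * (b i - b (i - 1))) + (\<Sum>i\<in>{Suc 0..n}. b i - b (i - 1))"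
    by (simp add: sum.distrib[symmetric] Suc_diff_le algebra_simps atLeastLessThanSuc_atLeastAtMost)
  also have "(\<Sum>i\<in>{1..<Suc n}. of_nat (n - i) * (b i - b (i - 1)))
      = (\<Sum>i\<in>{1..<n}. of_nat (n - i) * (b i - b (i - 1)))"
    by (cases n) (simp_all add: atLeastLessThanSuc)
  also note Suc.IH
  also have "(\<Sum>i\<in>{Suc 0..n}. b i - b (i - 1)) = b n - b 0"
    by (rule sum_telescope'') simp
  finally show ?case
    by (simp add: algebra_simps)
qed

lemma one_minus_2H_of_barred_change:
  assumes "barred x \<noteq> barred y"
  shows "1 - 2 * H x y = of_bool (barred y) - of_bool (barred x)"
  using assms by (cases x; cases y) (auto simp: barred_def H_def)

lemma sum_Zset_eq_barred_differences:
  "(\<Sum>i\<in>Zset n xs. int (n - i) * (1 - 2 * H (xs ! (i - 1)) (xs ! i)))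
   = (\<Sum>i\<in>{1..<n}. int (n - i) * (of_bool (barred (xs ! i)) - of_bool (barred (xs ! (i - 1)))))"
proof -
  have "Zset n xs = {i \<in> {1..<n}. barred (xs ! (i - 1)) \<noteq> barred (xs ! i)}"
    unfolding Zset_def by auto
  then have "(\<Sum>i\<in>Zset n xs. int (n - i) * (1 - 2 * H (xs ! (i - 1)) (xs ! i)))
      = (\<Sum>i\<in>{1..<n}. if barred (xs ! (i - 1)) \<noteq> barred (xs ! i)
           then int (n - i) * (1 - 2 * H (xs ! (i - 1)) (xs ! i)) else 0)"
    by (simp only: sum.inter_filter[OF finite_atLeastLessThan])
  also have "\<dots> = (\<Sum>i\<in>{1..<n}. int (n - i) * (of_bool (barred (xs ! i)) - of_bool (barred (xs ! (i - 1)))))"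
    by (rule sum.cong) (auto simp: one_minus_2H_of_barred_change)
  finally show ?thesis .
qed

lemma sum_wt:
  assumes "in_alphabet n x"
  shows "(\<Sum>j=1..n. wt x j) = 1 - 2 * of_bool (barred x)"
  using assms by (cases x) (auto simp: in_alphabet_def barred_def)

lemma size_part_E:
  assumes "xs \<in> E n lam"
  shows "size_part n lam = int n - 2 * (\<Sum>t<n. of_bool (barred (xs ! t)))"
proof -
  have "size_part n lam = (\<Sum>j=1..n. \<Sum>t<n. wt (xs ! t) j)"
    using assms unfolding size_part_def E_def psum_def by simp
  also have "\<dots> = (\<Sum>t<n. \<Sum>j=1..n. wt (xs ! t) j)"
    by (rule sum.swap)
  also have "\<dots> = (\<Sum>t<n. 1 - 2 * of_bool (barred (xs ! t)))"
    using assms by (intro sum.cong refl sum_wt) (auto simp: E_def)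
  finally show ?thesis
    by (simp add: sum_subtractf sum_distrib_left)
qed

lemma E_first_letter_unbarred:
  assumes "xs \<in> E n lam" and "0 < n"
  shows "\<not> barred (xs ! 0)"
proof
  assume "barred (xs ! 0)"
  then obtain k where k: "xs ! 0 = Bar k"
    by (cases "xs ! 0") (auto simp: barred_def)
  have "in_alphabet n (xs ! 0)" and "is_partition n (psum xs 1)"
    using assms by (auto simp: E_def)
  with k have "0 \<le> psum xs 1 k"
    by (auto simp: in_alphabet_def is_partition_def)
  with k show False
    by (simp add: psum_def)
qed

theorem mainTheorem11:
  fixes n :: nat and lam :: "nat \<Rightarrow> int" and xs :: "letter list"
  assumes "is_partition n lam"
    and "xs \<in> E n lam"
  shows "real_of_int (\<Sum>i\<in>Zset n xs. int (n - i) * (1 - 2 * H (xs ! (i - 1)) (xs ! i)))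
           = (real n - real_of_int (size_part n lam)) / 2"
proof -
  have "int n * of_bool (barred (xs ! 0)) = 0"
    using E_first_letter_unbarred[OF assms(2)] by (cases "n = 0") auto
  then have "(\<Sum>i\<in>Zset n xs. int (n - i) * (1 - 2 * H (xs ! (i - 1)) (xs ! i)))
      = (\<Sum>t<n. of_bool (barred (xs ! t)))"
    by (simp only: sum_Zset_eq_barred_differences
        sum_by_parts_weighted[of n "\<lambda>i. of_bool (barred (xs ! i))"])
  then show ?thesis
    by (simp add: size_part_E[OF assms(2)])
qed

end
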